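(* There exist a constant $c_0\in(0,1)$ and a 1-sided error, nonadaptive, $t$-online-erasure-resilient $\varepsilon$-tester for linearity of functions $f:\{0,1\}^d\to\{0,1\}$ that is correct whenever $t\le c_0\cdot\varepsilon^{5/4}\cdot 2^{d/4}$ and makes $O\big(\frac1\varepsilon\log\frac t\varepsilon\big)$ queries.
   Context: Online-erasure model. An input is a function $f:D\to R$ on a finite domain $D$. An algorithm accesses $f$ only through an oracle $\mathcal{O}$ by querying points $x\in D$ one at a time and receiving $\mathcal{O}(x)$. Initially $\mathcal{O}(x)=f(x)$ for all $x\in D$. For $t\in\mathbb{N}$, a $t$-online-erasure oracle, after answering each query, may choose up to $t$ points $x\in D$ and set $\mathcal{O}(x)=\perp$ (a special "erased" symbol); these values are used to answer all future queries. The choice of erasures (the adversarial strategy) may depend on $f$, on the queries and answers so far, and on the algorithm's code, but not on the algorithm's future random coins; the algorithm does not know where erasures are. A property $\mathcal{P}$ is a set of functions; $f$ is $\varepsilon$-far from $\mathcal{P}$ if for every $g\in\mathcal{P}$, $f$ and $g$ differ on at least an $\varepsilon$ fraction of $D$. A $t$-online-erasure-resilient $\varepsilon$-tester for $\mathcal{P}$ is a randomized algorithm that, given $t,\varepsilon$ and access to $f$ via a $t$-online-erasure oracle, for every adversarial strategy accepts with probability at least $2/3$ if $f\in\mathcal{P}$ and rejects with probability at least $2/3$ if $f$ is $\varepsilon$-far from $\mathcal{P}$. It has 1-sided error if it accepts every $f\in\mathcal{P}$ with probability 1; it is nonadaptive if its queries do not depend on answers to previous queries. A function $f:\{0,1\}^d\to\{0,1\}$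 is linear if there is $S\subseteq[d]$ with $f(x)=\sum_{i\in S}x[i]\bmod 2$ for all $x$. *)

theory Defs
  imports "HOL-Probability.Probability"
begin

definition cube :: "nat \<Rightarrow> bool list set" where
  "cube d = {x. length x = d}"

definition linear_fn :: "nat \<Rightarrow> (bool list \<Rightarrow> bool) \<Rightarrow> bool" where
  "linear_fn d f \<longleftrightarrow> (\<exists>S \<subseteq> {..<d}. \<forall>x\<in>cube d. f x = odd (card {i\<in>S. x ! i}))"

definition eps_far :: "nat \<Rightarrow> real \<Rightarrow> (bool list \<Rightarrow> bool) \<Rightarrow> bool" where
  "eps_far d \<epsilon> f \<longleftrightarrow>
     (\<forall>g. linear_fn d g \<longrightarrow> real (card {x\<in>cube d. f x \<noteq> g x}) \<ge> \<epsilon> * real (card (cube d)))"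

text \<open>A history: the queries so far with their answers (None = erased symbol).\<close>
type_synonym history = "(bool list \<times> bool option) list"

text \<open>Running the online-erasure oracle on a (nonadaptive) query sequence.
  E is the set of erased points; after answering each query the adversary
  sees the history and erases the set adv h'.\<close>
fun oracle_run :: "(bool list \<Rightarrow> bool) \<Rightarrow> (history \<Rightarrow> bool list set) \<Rightarrow> bool list list
                   \<Rightarrow> history \<Rightarrow> bool list set \<Rightarrow> history" where
  "oracle_run f adv [] h E = h"
| "oracle_run f adv (q # qs) h E =
     (let h' = h @ [(q, if q \<in> E then None else Some (f q))]
      in oracle_run f adv qs h' (E \<union> adv h'))"

definition answers :: "(bool list \<Rightarrow> bool) \<Rightarrow> (history \<Rightarrow> bool list set) \<Rightarrow> bool list list
                       \<Rightarrow> bool option list" where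
  "answers f adv qs = map snd (oracle_run f adv qs [] {})"

definition erasure_adversary :: "nat \<Rightarrow> nat \<Rightarrow> (history \<Rightarrow> bool list set) \<Rightarrow> bool" where
  "erasure_adversary d t adv \<longleftrightarrow> (\<forall>h. adv h \<subseteq> cube d \<and> finite (adv h) \<and> card (adv h) \<le> t)"

text \<open>A randomized nonadaptive algorithm: a distribution over (query sequence, decision rule
  applied to the answer sequence). True = accept.\<close>
type_synonym nonadaptive_tester = "(bool list list \<times> (bool option list \<Rightarrow> bool)) pmf"

definition accept_prob :: "nonadaptive_tester \<Rightarrow> (bool list \<Rightarrow> bool) \<Rightarrow> (history \<Rightarrow> bool list set) \<Rightarrow> real" where
  "accept_prob T f adv = measure_pmf.prob T {(qs, dec). dec (answers f adv qs)}"

definition one_sided_oer_linearity_tester :: "nat \<Rightarrow> nat \<Rightarrow> real \<Rightarrow> nonadaptive_tester \<Rightarrow> bool" where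
  "one_sided_oer_linearity_tester d t \<epsilon> T \<longleftrightarrow>
     (\<forall>qd\<in>set_pmf T. set (fst qd) \<subseteq> cube d) \<and>
     (\<forall>f adv. erasure_adversary d t adv \<longrightarrow> linear_fn d f \<longrightarrow> accept_prob T f adv = 1) \<and>
     (\<forall>f adv. erasure_adversary d t adv \<longrightarrow> eps_far d \<epsilon> f \<longrightarrow> accept_prob T f adv \<le> 1/3)"

end

theory Submission
  imports Defs
begin

(*
  The tester repeats a BLR-type round: pick k uniform points x_1, ..., x_k of the cube and a
  uniform even-size S of [k], query the points and then x_S = sum of the x_i with i in S, and
  reject if the answers violate linearity. Linear functions always pass. If f is eps-far, Fourier
  analysis shows that a parity check with |S| even and nonempty fails with probability at least
  eps/2, since sum_T fhat(T)^(|S|+1) <= max_T fhat(T) <= 1 - 2 eps by Parseval.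

  The adversary can only spoil a round by having erased one of its queries beforehand. With B
  erasures in total, some x_j is erased with probability at most k B / 2^d, and x_S is erased only
  if it equals one of B points: sets S whose sum x_S is unique account for at most B of the
  2^(k-1) choices, and two distinct S collide with probability 2^-d. Taking 2^k of order
  t log(t/eps) / eps^2 and O(1/eps) rounds keeps this loss below eps/8 whenever
  t = O(eps^(5/4) 2^(d/4)), so every round rejects with probability at least eps/8 whatever
  happened before.
*)

section \<open>Fourier analysis on the cube\<close>

definition pm :: "bool \<Rightarrow> real" where
  "pm b = (if b then -1 else 1)"

definition chi :: "nat set \<Rightarrow> bool list \<Rightarrow> real" where
  "chi T x = (\<Prod>i\<in>T. pm (x ! i))"

definition parity :: "nat set \<Rightarrow> bool list \<Rightarrow> bool" where
  "parity T x \<longleftrightarrow> odd (card {i\<in>T. x ! i})"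

definition fourier :: "nat \<Rightarrow> (bool list \<Rightarrow> real) \<Rightarrow> nat set \<Rightarrow> real" where
  "fourier d F T = (\<Sum>x\<in>cube d. F x * chi T x) / 2 ^ d"

definition xor_sum :: "nat \<Rightarrow> nat set \<Rightarrow> bool list list \<Rightarrow> bool list" where
  "xor_sum d S xs = map (\<lambda>j. odd (card {i\<in>S. xs ! i ! j})) [0..<d]"

lemma pm_mult_self [simp]: "pm b * pm b = 1"
  by (simp add: pm_def)

lemma pm_mult_pm: "pm a * pm b = (if a = b then 1 else -1)"
  by (simp add: pm_def)

lemma pm_inject: "pm a = pm b \<longleftrightarrow> a = b"
  by (simp add: pm_def)

lemma pm_odd_card: "finite A \<Longrightarrow> pm (odd (card {i\<in>A. P i})) = (\<Prod>i\<in>A. pm (P i))"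
proof (induction A rule: finite_induct)
  case (insert a A)
  show ?case
  proof (cases "P a")
    case True
    then have "{i\<in>insert a A. P i} = insert a {i\<in>A. P i}" by auto
    with insert True show ?thesis by (simp add: insert.IH[symmetric]) (simp add: pm_def)
  next
    case False
    then have "{i\<in>insert a A. P i} = {i\<in>A. P i}" by auto
    with insert False show ?thesis by (simp add: insert.IH[symmetric]) (simp add: pm_def)
  qed
qed (simp add: pm_def)

lemma chi_eq_pm_parity: "finite T \<Longrightarrow> chi T x = pm (parity T x)"
  by (simp add: chi_def parity_def pm_odd_card)

lemma chi_mult_self [simp]: "chi T x * chi T x = 1"
  by (simp add: chi_def prod.distrib[symmetric])

lemma chi_xor_sum:
  assumes "T \<subseteq> {..<d}" "finite S"
  shows "chi T (xor_sum d S xs) = (\<Prod>i\<in>S. chi T (xs ! i))"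
proof -
  have "chi T (xor_sum d S xs) = (\<Prod>j\<in>T. \<Prod>i\<in>S. pm (xs ! i ! j))"
    unfolding chi_def xor_sum_def using assms
    by (intro prod.cong) (auto simp: pm_odd_card)
  also have "\<dots> = (\<Prod>i\<in>S. chi T (xs ! i))"
    by (subst prod.swap) (simp add: chi_def)
  finally show ?thesis .
qed

lemma finite_cube [simp]: "finite (cube d)"
  using finite_lists_length_eq[of "UNIV :: bool set" d] by (simp add: cube_def)

lemma card_cube: "card (cube d) = 2 ^ d"
  using card_lists_length_eq[of "UNIV :: bool set" d] by (simp add: cube_def)

lemma sum_lists_length_Suc:
  "(\<Sum>xs | set xs \<subseteq> A \<and> length xs = Suc k. g xs) =
   (\<Sum>x\<in>A. \<Sum>xs | set xs \<subseteq> A \<and> length xs = k. g (x # xs))"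
proof -
  have "inj_on (\<lambda>(xs, x). x # xs) ({xs. set xs \<subseteq> A \<and> length xs = k} \<times> A)"
    by (auto simp: inj_on_def)
  then have "(\<Sum>xs | set xs \<subseteq> A \<and> length xs = Suc k. g xs) =
             (\<Sum>(xs, x)\<in>{xs. set xs \<subseteq> A \<and> length xs = k} \<times> A. g (x # xs))"
    by (simp add: lists_length_Suc_eq sum.reindex case_prod_unfold)
  then show ?thesis
    by (simp add: sum.cartesian_product[symmetric] sum.swap[of _ A])
qed

lemma sum_prod_lists_length:
  fixes h :: "nat \<Rightarrow> 'a \<Rightarrow> 'b::comm_semiring_1"
  shows "(\<Sum>xs | set xs \<subseteq> A \<and> length xs = k. \<Prod>i<k. h i (xs ! i)) = (\<Prod>i<k. \<Sum>x\<in>A. h i x)"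
proof (induction k arbitrary: h)
  case (Suc k)
  have "(\<Sum>xs | set xs \<subseteq> A \<and> length xs = Suc k. \<Prod>i<Suc k. h i (xs ! i)) =
        (\<Sum>x\<in>A. h 0 x * (\<Sum>xs | set xs \<subseteq> A \<and> length xs = k. \<Prod>i<k. h (Suc i) (xs ! i)))"
    by (simp add: sum_lists_length_Suc prod.lessThan_Suc_shift sum_distrib_left del: prod.lessThan_Suc)
  also have "\<dots> = (\<Prod>i<Suc k. \<Sum>x\<in>A. h i x)"
    by (simp add: Suc.IH[of "\<lambda>i. h (Suc i)"] prod.lessThan_Suc_shift sum_distrib_right del: prod.lessThan_Suc)
  finally show ?case .
next
  case 0
  have "{xs. set xs \<subseteq> A \<and> length xs = 0} = {[]}" by auto
  then show ?case by simp
qed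

lemma sum_prod_cube:
  fixes h :: "nat \<Rightarrow> bool \<Rightarrow> 'b::comm_semiring_1"
  shows "(\<Sum>x\<in>cube d. \<Prod>i<d. h i (x ! i)) = (\<Prod>i<d. \<Sum>b\<in>UNIV. h i b)"
  using sum_prod_lists_length[where h=h and A=UNIV and k=d] by (simp add: cube_def)

lemma sum_chi_eq_0:
  assumes "T \<subseteq> {..<d}" "T \<noteq> {}"
  shows "(\<Sum>x\<in>cube d. chi T x) = 0"
proof -
  obtain i where i: "i \<in> T" using assms(2) by blast
  have "chi T x = (\<Prod>j<d. if j \<in> T then pm (x ! j) else 1)" for x
    using assms(1) by (simp add: chi_def prod.If_cases Int_absorb1)
  then have "(\<Sum>x\<in>cube d. chi T x) = (\<Prod>j<d. \<Sum>b\<in>UNIV. if j \<in> T then pm b else 1)"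
    using sum_prod_cube[of "\<lambda>j b. if j \<in> T then pm b else 1" d] by simp
  also have "\<dots> = 0"
    using i assms(1) by (intro prod_zero) (auto simp: UNIV_bool pm_def)
  finally show ?thesis .
qed

lemma sum_chi_mult_chi:
  assumes "x \<in> cube d" "y \<in> cube d"
  shows "(\<Sum>T\<in>Pow {..<d}. chi T x * chi T y) = (if x = y then 2 ^ d else 0)"
proof -
  have "(\<Sum>T\<in>Pow {..<d}. chi T x * chi T y) = (\<Prod>i<d. pm (x ! i) * pm (y ! i) + 1)"
    by (subst prod_add) (simp_all add: chi_def prod.distrib)
  moreover have "\<exists>i<d. x ! i \<noteq> y ! i" if "x \<noteq> y"
    using that assms nth_equalityI[of x y] by (auto simp: cube_def)
  ultimately show ?thesis
    by (auto simp: pm_mult_pm intro: prod_zero)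
qed

lemma fourier_inversion:
  assumes "x \<in> cube d"
  shows "(\<Sum>T\<in>Pow {..<d}. fourier d F T * chi T x) = F x"
proof -
  have "(\<Sum>T\<in>Pow {..<d}. fourier d F T * chi T x) =
        (\<Sum>y\<in>cube d. F y / 2 ^ d * (\<Sum>T\<in>Pow {..<d}. chi T y * chi T x))"
    unfolding fourier_def sum_divide_distrib sum_distrib_right sum_distrib_left
    by (subst sum.swap) (simp add: mult_ac)
  also have "\<dots> = F x"
    using assms by (simp add: sum_chi_mult_chi if_distrib sum.delta' cong: if_cong)
  finally show ?thesis .
qed

lemma parseval:
  assumes "\<And>x. x \<in> cube d \<Longrightarrow> F x * F x = 1"
  shows "(\<Sum>T\<in>Pow {..<d}. fourier d F T ^ 2) = 1"
proof -
  have "(\<Sum>T\<in>Pow {..<d}. fourier d F T ^ 2) =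
        (\<Sum>x\<in>cube d. F x / 2 ^ d * (\<Sum>T\<in>Pow {..<d}. fourier d F T * chi T x))"
    unfolding power2_eq_square fourier_def[of d F] sum_divide_distrib sum_distrib_left
    by (subst sum.swap) (simp add: sum_distrib_left mult_ac)
  also have "\<dots> = (\<Sum>x\<in>cube d. 1 / 2 ^ d)"
    using assms by (simp add: fourier_inversion)
  also have "\<dots> = 1"
    by (simp add: card_cube)
  finally show ?thesis .
qed

section \<open>Parity checks on tuples of points\<close>

definition cube_tuples :: "nat \<Rightarrow> nat \<Rightarrow> bool list list set" where
  "cube_tuples d k = {xs. set xs \<subseteq> cube d \<and> length xs = k}"

definition parity_check :: "(bool list \<Rightarrow> bool) \<Rightarrow> nat \<Rightarrow> nat set \<Rightarrow> bool list list \<Rightarrow> bool" where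
  "parity_check f d S xs \<longleftrightarrow> odd (card {i\<in>S. f (xs ! i)}) = f (xor_sum d S xs)"

lemma finite_cube_tuples [simp]: "finite (cube_tuples d k)"
  by (simp add: cube_tuples_def finite_lists_length_eq)

lemma card_cube_tuples: "card (cube_tuples d k) = (2 ^ d) ^ k"
  by (simp add: cube_tuples_def card_lists_length_eq card_cube)

lemma cube_tuples_nth: "xs \<in> cube_tuples d k \<Longrightarrow> i < k \<Longrightarrow> xs ! i \<in> cube d"
  by (auto simp: cube_tuples_def)

lemma xor_sum_in_cube [simp]: "xor_sum d S xs \<in> cube d"
  by (simp add: xor_sum_def cube_def)

lemma sum_prod_subset_cube_tuples:
  assumes "S \<subseteq> {..<k}"
  shows "(\<Sum>xs\<in>cube_tuples d k. \<Prod>i\<in>S. g (xs ! i)) =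
         (\<Sum>x\<in>cube d. g x :: real) ^ card S * (2 ^ d) ^ (k - card S)"
proof -
  have S: "{..<k} \<inter> S = S" "card ({..<k} \<inter> - S) = k - card S"
    using assms by (auto simp: Diff_eq[symmetric] card_Diff_subset finite_subset)
  have "(\<Prod>i\<in>S. g (xs ! i)) = (\<Prod>i<k. if i \<in> S then g (xs ! i) else 1)" for xs
    using S by (simp add: prod.If_cases)
  then have "(\<Sum>xs\<in>cube_tuples d k. \<Prod>i\<in>S. g (xs ! i)) =
             (\<Prod>i<k. \<Sum>x\<in>cube d. if i \<in> S then g x else 1)"
    using sum_prod_lists_length[where h="\<lambda>i x. if i \<in> S then g x else 1" and A="cube d" and k=k]
    by (simp add: cube_tuples_def)
  also have "\<dots> = (\<Prod>i<k. if i \<in> S then (\<Sum>x\<in>cube d. g x) else 2 ^ d)"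
    by (intro prod.cong) (simp_all add: card_cube)
  also have "\<dots> = (\<Sum>x\<in>cube d. g x) ^ card S * (2 ^ d) ^ (k - card S)"
    using S by (simp add: prod.If_cases)
  finally show ?thesis .
qed

lemma sum_parity_check_fourier:
  assumes "S \<subseteq> {..<k}"
  shows "(\<Sum>xs\<in>cube_tuples d k. (\<Prod>i\<in>S. F (xs ! i)) * F (xor_sum d S xs)) =
         (2 ^ d) ^ k * (\<Sum>T\<in>Pow {..<d}. fourier d F T ^ Suc (card S))"
proof -
  have finS: "finite S"
    using assms finite_subset by blast
  have "(\<Prod>i\<in>S. F (xs ! i)) * F (xor_sum d S xs) =
        (\<Sum>T\<in>Pow {..<d}. fourier d F T * (\<Prod>i\<in>S. F (xs ! i) * chi T (xs ! i)))" for xs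
    using fourier_inversion[OF xor_sum_in_cube, of d F S xs, symmetric] finS
    by (simp add: chi_xor_sum sum_distrib_left prod.distrib mult_ac)
  then have "(\<Sum>xs\<in>cube_tuples d k. (\<Prod>i\<in>S. F (xs ! i)) * F (xor_sum d S xs)) =
        (\<Sum>T\<in>Pow {..<d}. fourier d F T * (\<Sum>xs\<in>cube_tuples d k. \<Prod>i\<in>S. F (xs ! i) * chi T (xs ! i)))"
    by (simp add: sum.swap[of _ "cube_tuples d k"] sum_distrib_left)
  also have "\<dots> = (\<Sum>T\<in>Pow {..<d}. fourier d F T * ((2 ^ d * fourier d F T) ^ card S * (2 ^ d) ^ (k - card S)))"
  proof (intro sum.cong refl)
    fix T
    show "fourier d F T * (\<Sum>xs\<in>cube_tuples d k. \<Prod>i\<in>S. F (xs ! i) * chi T (xs ! i)) =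
          fourier d F T * ((2 ^ d * fourier d F T) ^ card S * (2 ^ d) ^ (k - card S))"
      using sum_prod_subset_cube_tuples[OF assms, where d=d and g="\<lambda>x. F x * chi T x"]
      by (simp add: fourier_def)
  qed
  also have "\<dots> = (2 ^ d) ^ k * (\<Sum>T\<in>Pow {..<d}. fourier d F T ^ Suc (card S))"
  proof -
    have "card S \<le> k"
      using assms card_mono[of "{..<k}" S] by simp
    then have "((2::real) ^ d) ^ card S * (2 ^ d) ^ (k - card S) = (2 ^ d) ^ k"
      by (simp flip: power_add)
    then show ?thesis
      by (simp add: sum_distrib_left power_mult_distrib mult_ac)
  qed
  finally show ?thesis .
qed

lemma sum_odd_power_le:
  fixes a :: "'i \<Rightarrow> real"
  assumes "finite I" "(\<Sum>i\<in>I. a i ^ 2) = 1" "\<And>i. i \<in> I \<Longrightarrow> a i \<le> c" "even r" "r \<noteq> 0"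
  shows "(\<Sum>i\<in>I. a i ^ Suc r) \<le> max 0 c"
proof -
  have "a i ^ Suc r \<le> max 0 c * a i ^ 2" if i: "i \<in> I" for i
  proof (cases "0 \<le> a i")
    case True
    have "a i ^ 2 \<le> 1"
      using member_le_sum[of i I "\<lambda>i. a i ^ 2"] assms(1,2) i by simp
    then have "a i \<le> 1"
      using True by (simp add: power_le_one_iff)
    moreover have "1 \<le> r - 1"
      using assms(4,5) by presburger
    ultimately have "a i ^ (r - 1) \<le> max 0 c"
      using True assms(3)[OF i] assms(5) power_decreasing[of 1 "r - 1" "a i"] by fastforce
    moreover have "a i ^ Suc r = a i ^ (r - 1) * a i ^ 2"
      using assms(5) by (simp flip: power_add)
    ultimately show ?thesis
      by (simp add: mult_right_mono)
  next
    case False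
    then have "a i ^ Suc r < 0"
      using assms(4) by (subst power_less_zero_eq) simp
    then show ?thesis
      by (simp add: order.trans[OF less_imp_le])
  qed
  then have "(\<Sum>i\<in>I. a i ^ Suc r) \<le> (\<Sum>i\<in>I. max 0 c * a i ^ 2)"
    by (rule sum_mono)
  also have "\<dots> = max 0 c"
    by (simp add: sum_distrib_left[symmetric] assms(2))
  finally show ?thesis .
qed

lemma linear_fn_parity: "T \<subseteq> {..<d} \<Longrightarrow> linear_fn d (parity T)"
  unfolding linear_fn_def parity_def by blast

lemma sum_pm_mult_pm:
  assumes "finite A"
  shows "(\<Sum>x\<in>A. pm (p x) * pm (q x)) = real (card A) - 2 * real (card {x\<in>A. p x \<noteq> q x})"
proof -
  have "(\<Sum>x\<in>A. pm (p x) * pm (q x)) = (\<Sum>x\<in>A. 1 - 2 * of_bool (p x \<noteq> q x))"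
    by (intro sum.cong) (auto simp: pm_mult_pm)
  also have "\<dots> = real (card A) - 2 * (\<Sum>x\<in>A. of_bool (p x \<noteq> q x))"
    by (simp add: sum_subtractf sum_distrib_left)
  also have "(\<Sum>x\<in>A. of_bool (p x \<noteq> q x)) = real (card {x\<in>A. p x \<noteq> q x})"
    using assms by (simp add: Int_def)
  finally show ?thesis .
qed

lemma fourier_le_if_eps_far:
  assumes "eps_far d \<epsilon> f" "T \<subseteq> {..<d}"
  shows "fourier d (\<lambda>x. pm (f x)) T \<le> 1 - 2 * \<epsilon>"
proof -
  have "\<epsilon> * 2 ^ d \<le> real (card {x\<in>cube d. f x \<noteq> parity T x})"
    using assms linear_fn_parity unfolding eps_far_def by (simp add: card_cube)
  moreover have "(\<Sum>x\<in>cube d. pm (f x) * chi T x) =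
                 2 ^ d - 2 * real (card {x\<in>cube d. f x \<noteq> parity T x})"
    using assms(2) finite_subset[OF assms(2)]
    by (simp add: chi_eq_pm_parity sum_pm_mult_pm card_cube)
  ultimately show ?thesis
    by (simp add: fourier_def field_simps)
qed

lemma card_parity_check_failures_ge:
  assumes "eps_far d \<epsilon> f" "0 < \<epsilon>" "\<epsilon> < 1"
    and "S \<subseteq> {..<k}" "even (card S)" "S \<noteq> {}"
  shows "(2 ^ d) ^ k * \<epsilon> / 2 \<le> real (card {xs\<in>cube_tuples d k. \<not> parity_check f d S xs})"
proof -
  have finS: "finite S"
    using assms(4) finite_subset by blast
  have "(\<Sum>T\<in>Pow {..<d}. fourier d (\<lambda>x. pm (f x)) T ^ Suc (card S)) \<le> max 0 (1 - 2 * \<epsilon>)"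
    using assms finS
    by (intro sum_odd_power_le parseval fourier_le_if_eps_far) auto
  also have "\<dots> \<le> 1 - \<epsilon>"
    using assms(2,3) by simp
  finally have "(\<Sum>xs\<in>cube_tuples d k. (\<Prod>i\<in>S. pm (f (xs ! i))) * pm (f (xor_sum d S xs)))
                \<le> (2 ^ d) ^ k * (1 - \<epsilon>)"
    using sum_parity_check_fourier[OF assms(4), where d=d and F="\<lambda>x. pm (f x)"]
    by (simp add: mult_left_mono del: power_Suc)
  moreover have "(\<Sum>xs\<in>cube_tuples d k. (\<Prod>i\<in>S. pm (f (xs ! i))) * pm (f (xor_sum d S xs))) =
      (2 ^ d) ^ k - 2 * real (card {xs\<in>cube_tuples d k. \<not> parity_check f d S xs})"
    using finS by (simp add: pm_odd_card[symmetric] sum_pm_mult_pm card_cube_tuples parity_check_def)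
  ultimately show ?thesis
    by (simp add: algebra_simps)
qed

lemma parity_check_if_linear:
  assumes "linear_fn d f" "S \<subseteq> {..<k}" "xs \<in> cube_tuples d k"
  shows "parity_check f d S xs"
proof -
  obtain U where U: "U \<subseteq> {..<d}" "\<And>x. x \<in> cube d \<Longrightarrow> f x = parity U x"
    using assms(1) unfolding linear_fn_def parity_def by blast
  have fin: "finite U" "finite S"
    using U(1) assms(2) finite_subset by blast+
  have "pm (odd (card {i\<in>S. f (xs ! i)})) = (\<Prod>i\<in>S. chi U (xs ! i))"
    using assms(2,3) fin by (simp add: pm_odd_card U(2) cube_tuples_nth chi_eq_pm_parity subset_eq)
  also have "\<dots> = chi U (xor_sum d S xs)"
    using fin U(1) by (simp add: chi_xor_sum)
  also have "\<dots> = pm (f (xor_sum d S xs))"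
    using fin by (simp add: U(2) chi_eq_pm_parity)
  finally show ?thesis
    by (simp add: parity_check_def pm_inject)
qed

lemma prod_mult_prod_eq_prod_sym_diff:
  fixes c :: "'i \<Rightarrow> 'a::comm_monoid_mult"
  assumes "finite S" "finite S'" "\<And>i. c i * c i = 1"
  shows "prod c S * prod c S' = prod c ((S - S') \<union> (S' - S))"
proof -
  have "prod c (S \<inter> S') * prod c (S \<inter> S') = 1"
    by (simp add: prod.distrib[symmetric] assms(3))
  moreover have "prod c ((S - S') \<union> (S' - S)) = prod c (S - S') * prod c (S' - S)"
    using assms(1,2) by (intro prod.union_disjoint) auto
  moreover have "prod c S = prod c (S \<inter> S') * prod c (S - S')"
                "prod c S' = prod c (S' \<inter> S) * prod c (S' - S)"
    using assms(1,2) by (simp_all add: prod.Int_Diff)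
  ultimately show ?thesis
    by (simp add: Int_commute mult_ac)
qed

(* x_S = x_S' iff all characters agree on them, and chi_T(x_S) chi_T(x_S') is the product of the
   chi_T(x_i) over the symmetric difference of S and S', whose mean is 0 unless T = {}. *)
lemma card_xor_sum_collisions:
  assumes "S \<subseteq> {..<k}" "S' \<subseteq> {..<k}" "S \<noteq> S'"
  shows "real (card {xs\<in>cube_tuples d k. xor_sum d S xs = xor_sum d S' xs}) = (2 ^ d) ^ k / 2 ^ d"
proof -
  define D where "D = (S - S') \<union> (S' - S)"
  have fin: "finite S" "finite S'"
    using assms(1,2) finite_subset by blast+
  have D: "D \<subseteq> {..<k}" "card D \<noteq> 0" "card D \<le> k"
    using assms fin card_mono[of "{..<k}" D] by (auto simp: D_def)
  have sum_chi: "(\<Sum>xs\<in>cube_tuples d k. \<Prod>i\<in>D. chi T (xs ! i)) = (if T = {} then (2 ^ d) ^ k else 0)"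
    if "T \<subseteq> {..<d}" for T
  proof (cases "T = {}")
    case True
    then show ?thesis
      using sum_prod_subset_cube_tuples[OF D(1), where d=d and g="chi T"] D(3)
      by (simp add: chi_def card_cube flip: power_add)
  next
    case False
    then show ?thesis
      using sum_prod_subset_cube_tuples[OF D(1), where d=d and g="chi T"] D(2) that
      by (simp add: sum_chi_eq_0)
  qed
  have "real (card {xs\<in>cube_tuples d k. xor_sum d S xs = xor_sum d S' xs}) =
        (\<Sum>xs\<in>cube_tuples d k. of_bool (xor_sum d S xs = xor_sum d S' xs))"
    by (simp add: Int_def)
  also have "\<dots> = (\<Sum>xs\<in>cube_tuples d k.
                      (\<Sum>T\<in>Pow {..<d}. chi T (xor_sum d S xs) * chi T (xor_sum d S' xs)) / 2 ^ d)"
    by (intro sum.cong refl) (simp add: sum_chi_mult_chi)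
  also have "\<dots> = (\<Sum>T\<in>Pow {..<d}. \<Sum>xs\<in>cube_tuples d k. \<Prod>i\<in>D. chi T (xs ! i)) / 2 ^ d"
    using fin unfolding D_def
    by (simp add: chi_xor_sum prod_mult_prod_eq_prod_sym_diff sum_divide_distrib[symmetric]
        sum.swap[of _ "cube_tuples d k"])
  also have "\<dots> = (\<Sum>T\<in>Pow {..<d}. if T = {} then (2 ^ d) ^ k else 0) / 2 ^ d"
    by (simp add: sum_chi)
  also have "\<dots> = (2 ^ d) ^ k / 2 ^ d"
    by (simp add: sum.delta')
  finally show ?thesis .
qed

section \<open>Running the erasure oracle\<close>

(* The oracle state is the history together with the set of erased points. Unlike answers,
   fresh_answers returns only the answers to the new queries, so runs compose by
   fresh_answers_append. *)
fun run_oracle :: "(bool list \<Rightarrow> bool) \<Rightarrow> (history \<Rightarrow> bool list set) \<Rightarrow> bool list list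
                   \<Rightarrow> history \<times> bool list set \<Rightarrow> history \<times> bool list set" where
  "run_oracle f adv [] st = st"
| "run_oracle f adv (q # qs) (h, E) =
     (let h' = h @ [(q, if q \<in> E then None else Some (f q))]
      in run_oracle f adv qs (h', E \<union> adv h'))"

fun fresh_answers :: "(bool list \<Rightarrow> bool) \<Rightarrow> (history \<Rightarrow> bool list set) \<Rightarrow> bool list list
                      \<Rightarrow> history \<times> bool list set \<Rightarrow> bool option list" where
  "fresh_answers f adv [] st = []"
| "fresh_answers f adv (q # qs) (h, E) =
     (let a = (if q \<in> E then None else Some (f q)); h' = h @ [(q, a)]
      in a # fresh_answers f adv qs (h', E \<union> adv h'))"

lemma length_fresh_answers [simp]: "length (fresh_answers f adv qs st) = length qs"
  by (induction f adv qs st rule: fresh_answers.induct) (simp_all add: Let_def)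

lemma fresh_answers_append:
  "fresh_answers f adv (xs @ ys) st =
   fresh_answers f adv xs st @ fresh_answers f adv ys (run_oracle f adv xs st)"
  by (induction f adv xs st rule: fresh_answers.induct) (simp_all add: Let_def)

lemma fresh_answers_nth:
  "j < length qs \<Longrightarrow> fresh_answers f adv qs st ! j =
     (if qs ! j \<in> snd (run_oracle f adv (take j qs) st) then None else Some (f (qs ! j)))"
proof (induction f adv qs st arbitrary: j rule: fresh_answers.induct)
  case (2 f adv q qs h E)
  then show ?case
    by (cases j) (simp_all add: Let_def)
qed simp

lemma answers_eq_fresh_answers: "answers f adv qs = fresh_answers f adv qs ([], {})"
proof -
  have "map snd (oracle_run f adv qs h E) = map snd h @ fresh_answers f adv qs (h, E)" for h E
    by (induction qs arbitrary: h E) (simp_all add: Let_def)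
  then show ?thesis
    by (simp add: answers_def)
qed

lemma erased_run_oracle_bounded:
  assumes "erasure_adversary d t adv" "finite E"
  shows "finite (snd (run_oracle f adv qs (h, E))) \<and>
         card (snd (run_oracle f adv qs (h, E))) \<le> card E + t * length qs"
  using assms(2)
proof (induction qs arbitrary: h E)
  case (Cons q qs)
  define h' where "h' = h @ [(q, if q \<in> E then None else Some (f q))]"
  have "finite (adv h')" "card (adv h') \<le> t"
    using assms(1) by (auto simp: erasure_adversary_def)
  then have "finite (E \<union> adv h')" "card (E \<union> adv h') \<le> card E + t"
    using Cons.prems card_Un_le[of E "adv h'"] by auto
  then show ?case
    using Cons.IH[of "E \<union> adv h'" h'] by (simp add: h'_def Let_def)
qed simp

section \<open>One round of the tester\<close>

definition even_subsets :: "nat \<Rightarrow> nat set set" where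
  "even_subsets k = {S. S \<subseteq> {..<k} \<and> even (card S)}"

definition round_queries :: "nat \<Rightarrow> nat set \<Rightarrow> bool list list \<Rightarrow> bool list list" where
  "round_queries d S xs = xs @ [xor_sum d S xs]"

definition round_accepts :: "nat set \<Rightarrow> bool option list \<Rightarrow> bool" where
  "round_accepts S ans \<longleftrightarrow> None \<in> set ans \<or> odd (card {i\<in>S. the (ans ! i)}) = the (last ans)"

lemma finite_even_subsets [simp]: "finite (even_subsets k)"
  by (rule finite_subset[of _ "Pow {..<k}"]) (auto simp: even_subsets_def)

lemma card_even_subsets:
  assumes "k \<noteq> 0"
  shows "2 * card (even_subsets k) = 2 ^ k"
proof -
  let ?odd = "{S. S \<subseteq> {..<k} \<and> odd (card S)}"
  have "{} \<subset> {..<k}"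
    using assms by auto
  then have "card (even_subsets k) = card ?odd"
    using card_subsupersets_even_odd[of "{..<k}" "{}"] by (simp add: even_subsets_def)
  moreover have "card (even_subsets k) + card ?odd = card (Pow {..<k})"
    by (subst card_Un_disjoint[symmetric]) (auto simp: even_subsets_def intro: arg_cong[where f=card])
  ultimately show ?thesis
    by (simp add: card_Pow)
qed

lemma fresh_answers_eq_map_Some:
  assumes "\<And>j. j < length qs \<Longrightarrow> qs ! j \<notin> snd (run_oracle f adv (take j qs) st)"
  shows "fresh_answers f adv qs st = map (\<lambda>q. Some (f q)) qs"
  using assms by (intro nth_equalityI) (simp_all add: fresh_answers_nth)

lemma fresh_answers_eq_map_Some_if_None_notin:
  assumes "None \<notin> set (fresh_answers f adv qs st)"
  shows "fresh_answers f adv qs st = map (\<lambda>q. Some (f q)) qs"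
proof (rule fresh_answers_eq_map_Some)
  fix j assume "j < length qs"
  then show "qs ! j \<notin> snd (run_oracle f adv (take j qs) st)"
    using assms nth_mem[of j "fresh_answers f adv qs st"]
    by (auto simp: fresh_answers_nth split: if_splits)
qed

lemma round_accepts_map_Some:
  assumes "S \<subseteq> {..<k}" "xs \<in> cube_tuples d k"
  shows "round_accepts S (map (\<lambda>q. Some (f q)) (round_queries d S xs)) \<longleftrightarrow> parity_check f d S xs"
proof -
  have "{i\<in>S. the (map (\<lambda>q. Some (f q)) (round_queries d S xs) ! i)} = {i\<in>S. f (xs ! i)}"
    using assms by (auto simp: round_queries_def cube_tuples_def nth_append)
  then show ?thesis
    by (auto simp: round_accepts_def parity_check_def round_queries_def)
qed

lemma round_accepts_if_linear:
  assumes "linear_fn d f" "S \<in> even_subsets k" "xs \<in> cube_tuples d k"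
  shows "round_accepts S (fresh_answers f adv (round_queries d S xs) st)"
proof (cases "None \<in> set (fresh_answers f adv (round_queries d S xs) st)")
  case False
  have "S \<subseteq> {..<k}"
    using assms(2) by (simp add: even_subsets_def)
  then show ?thesis
    using assms(3) parity_check_if_linear[OF assms(1)] round_accepts_map_Some[of S k xs d f]
    by (simp add: fresh_answers_eq_map_Some_if_None_notin[OF False])
qed (simp add: round_accepts_def)

lemma round_rejects_if_unerased:
  assumes "S \<in> even_subsets k" "xs \<in> cube_tuples d k" "\<not> parity_check f d S xs"
    and "\<And>j. j < k \<Longrightarrow> xs ! j \<notin> snd (run_oracle f adv (take j xs) st)"
    and "xor_sum d S xs \<notin> snd (run_oracle f adv xs st)"
  shows "\<not> round_accepts S (fresh_answers f adv (round_queries d S xs) st)"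
proof -
  have "fresh_answers f adv (round_queries d S xs) st = map (\<lambda>q. Some (f q)) (round_queries d S xs)"
  proof (rule fresh_answers_eq_map_Some)
    fix j assume "j < length (round_queries d S xs)"
    then have "j < k \<or> j = k"
      using assms(2) by (auto simp: round_queries_def cube_tuples_def)
    then show "round_queries d S xs ! j \<notin> snd (run_oracle f adv (take j (round_queries d S xs)) st)"
      using assms(2,4,5) by (auto simp: round_queries_def cube_tuples_def nth_append)
  qed
  moreover have "S \<subseteq> {..<k}"
    using assms(1) by (simp add: even_subsets_def)
  ultimately show ?thesis
    using assms(2,3) round_accepts_map_Some[of S k xs d f] by simp
qed

lemma parity_check_failure_le:
  assumes "S \<in> even_subsets k" "xs \<in> cube_tuples d k"
  shows "(of_bool (\<not> parity_check f d S xs) :: real) \<le>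
           of_bool (\<not> round_accepts S (fresh_answers f adv (round_queries d S xs) st)) +
           (\<Sum>j<k. of_bool (xs ! j \<in> snd (run_oracle f adv (take j xs) st))) +
           of_bool (xor_sum d S xs \<in> snd (run_oracle f adv xs st))"
proof (cases "\<exists>j<k. xs ! j \<in> snd (run_oracle f adv (take j xs) st)")
  case True
  then obtain j where "j < k" "xs ! j \<in> snd (run_oracle f adv (take j xs) st)"
    by blast
  then have "1 \<le> (\<Sum>j<k. of_bool (xs ! j \<in> snd (run_oracle f adv (take j xs) st)) :: real)"
    using member_le_sum[of j "{..<k}" "\<lambda>j. of_bool (xs ! j \<in> snd (run_oracle f adv (take j xs) st)) :: real"]
    by simp
  then show ?thesis
    by simp
next
  case False
  then show ?thesis
    using round_rejects_if_unerased[OF assms] by auto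
qed

lemma sum_cube_tuples_Suc:
  "(\<Sum>xs\<in>cube_tuples d (Suc k). g xs) = (\<Sum>x\<in>cube d. \<Sum>xs\<in>cube_tuples d k. g (x # xs))"
  unfolding cube_tuples_def by (rule sum_lists_length_Suc)

lemma sum_erased_prefix_le:
  assumes "j < k" "\<And>zs. length zs = j \<Longrightarrow> finite (G zs) \<and> card (G zs) \<le> B"
  shows "(\<Sum>xs\<in>cube_tuples d k. of_bool (xs ! j \<in> G (take j xs))) \<le> real B * (2 ^ d) ^ k / 2 ^ d"
  using assms
proof (induction j arbitrary: k G)
  case 0
  then obtain k' where k: "k = Suc k'"
    using less_imp_Suc_add by blast
  have "finite (G [])" "card (G []) \<le> B"
    using "0.prems"(2)[of "[]"] by auto
  then have "card (cube d \<inter> {x. x \<in> G []}) \<le> B"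
    using card_mono[of "G []" "cube d \<inter> {x. x \<in> G []}"] by auto
  then show ?case
    by (simp add: k sum_cube_tuples_Suc card_cube_tuples sum_distrib_right[symmetric] mult_right_mono)
next
  case (Suc j)
  then obtain k' where k: "k = Suc k'" "j < k'"
    by (cases k) auto
  have "(\<Sum>x\<in>cube d. \<Sum>xs\<in>cube_tuples d k'. of_bool (xs ! j \<in> G (x # take j xs))) \<le>
        (\<Sum>x\<in>cube d. real B * (2 ^ d) ^ k' / 2 ^ d)"
    using Suc.IH[OF k(2), of "\<lambda>zs. G (_ # zs)"] Suc.prems(2) by (intro sum_mono) simp
  then show ?case
    by (simp add: k sum_cube_tuples_Suc card_cube)
qed

(* Sets S with a unique sum x_S inject into H; every other S takes part in a collision. *)
lemma card_xor_sum_in_le: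
  assumes "finite H" "card H \<le> B"
  shows "real (card {S\<in>even_subsets k. xor_sum d S xs \<in> H}) \<le>
         real B * (1 + (\<Sum>S\<in>even_subsets k. \<Sum>S'\<in>even_subsets k - {S}. of_bool (xor_sum d S' xs = xor_sum d S xs)))"
    (is "real (card ?A) \<le> real B * (1 + ?X)")
proof (cases "B = 0")
  case True
  then show ?thesis
    using assms by simp
next
  case False
  define colliding where "colliding = {S\<in>even_subsets k. \<exists>S'\<in>even_subsets k - {S}. xor_sum d S' xs = xor_sum d S xs}"
  have "inj_on (\<lambda>S. xor_sum d S xs) (?A - colliding)"
    by (auto simp: inj_on_def colliding_def)
  then have "card (?A - colliding) \<le> B"
    using card_inj_on_le[of _ "?A - colliding" H] assms by fastforce
  moreover have "card ?A \<le> card ((?A - colliding) \<union> colliding)"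
    by (intro card_mono) (auto simp: colliding_def)
  then have "card ?A \<le> card (?A - colliding) + card colliding"
    using card_Un_le[of "?A - colliding" colliding] by linarith
  moreover have "real (card colliding) \<le> ?X"
  proof -
    have "real (card colliding) = (\<Sum>S\<in>colliding. 1)"
      by simp
    also have "\<dots> \<le> (\<Sum>S\<in>colliding. \<Sum>S'\<in>even_subsets k - {S}. of_bool (xor_sum d S' xs = xor_sum d S xs))"
    proof (rule sum_mono)
      fix S assume "S \<in> colliding"
      then obtain S' where "S' \<in> even_subsets k - {S}" "xor_sum d S' xs = xor_sum d S xs"
        by (auto simp: colliding_def)
      then show "1 \<le> (\<Sum>S'\<in>even_subsets k - {S}. of_bool (xor_sum d S' xs = xor_sum d S xs) :: real)"
        using member_le_sum[of S' "even_subsets k - {S}" "\<lambda>S'. of_bool (xor_sum d S' xs = xor_sum d S xs) :: real"]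
        by simp
    qed
    also have "\<dots> \<le> ?X"
      by (rule sum_mono2) (auto simp: colliding_def)
    finally show ?thesis .
  qed
  moreover have "0 \<le> ?X"
    by (intro sum_nonneg) auto
  then have "?X \<le> real B * ?X"
    using False mult_right_mono[of 1 "real B" ?X] by simp
  ultimately show ?thesis
    by (simp add: algebra_simps)
qed

lemma sum_erased_xor_sum_le:
  assumes "\<And>xs. xs \<in> cube_tuples d k \<Longrightarrow> finite (H xs) \<and> card (H xs) \<le> B"
  shows "(\<Sum>xs\<in>cube_tuples d k. real (card {S\<in>even_subsets k. xor_sum d S xs \<in> H xs}))
         \<le> real B * (2 ^ d) ^ k + real B * real (card (even_subsets k)) ^ 2 * (2 ^ d) ^ k / 2 ^ d"
proof -
  let ?N = "real (card (even_subsets k))"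
  have "(\<Sum>xs\<in>cube_tuples d k. \<Sum>S\<in>even_subsets k. \<Sum>S'\<in>even_subsets k - {S}.
           of_bool (xor_sum d S' xs = xor_sum d S xs)) =
        (\<Sum>S\<in>even_subsets k. \<Sum>S'\<in>even_subsets k - {S}.
           real (card {xs\<in>cube_tuples d k. xor_sum d S' xs = xor_sum d S xs}))"
    by (simp only: sum.swap[where A="cube_tuples d k"]) (simp add: Int_def)
  also have "\<dots> = (\<Sum>S\<in>even_subsets k. \<Sum>S'\<in>even_subsets k - {S}. (2 ^ d) ^ k / 2 ^ d)"
    by (intro sum.cong refl card_xor_sum_collisions) (auto simp: even_subsets_def)
  also have "\<dots> \<le> (\<Sum>S\<in>even_subsets k. \<Sum>S'\<in>even_subsets k. (2 ^ d) ^ k / 2 ^ d)"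
    by (intro sum_mono sum_mono2) auto
  also have "\<dots> = ?N ^ 2 * (2 ^ d) ^ k / 2 ^ d"
    by (simp add: power2_eq_square)
  finally have collisions: "(\<Sum>xs\<in>cube_tuples d k. \<Sum>S\<in>even_subsets k. \<Sum>S'\<in>even_subsets k - {S}.
           of_bool (xor_sum d S' xs = xor_sum d S xs)) \<le> ?N ^ 2 * (2 ^ d) ^ k / 2 ^ d" .
  have "(\<Sum>xs\<in>cube_tuples d k. real (card {S\<in>even_subsets k. xor_sum d S xs \<in> H xs})) \<le>
      (\<Sum>xs\<in>cube_tuples d k. real B * (1 + (\<Sum>S\<in>even_subsets k. \<Sum>S'\<in>even_subsets k - {S}.
           of_bool (xor_sum d S' xs = xor_sum d S xs))))"
    using assms by (intro sum_mono card_xor_sum_in_le) auto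
  also have "\<dots> = real B * ((2 ^ d) ^ k + (\<Sum>xs\<in>cube_tuples d k. \<Sum>S\<in>even_subsets k.
           \<Sum>S'\<in>even_subsets k - {S}. of_bool (xor_sum d S' xs = xor_sum d S xs)))"
    by (simp only: sum_distrib_left[symmetric] sum.distrib sum_constant card_cube_tuples
        mult_1_right of_nat_power of_nat_numeral)
  also have "\<dots> \<le> real B * ((2 ^ d) ^ k + ?N ^ 2 * (2 ^ d) ^ k / 2 ^ d)"
    using collisions by (intro mult_left_mono) auto
  finally show ?thesis
    by (simp add: algebra_simps)
qed

lemma sum_parity_check_failures_ge:
  assumes "eps_far d \<epsilon> f" "0 < \<epsilon>" "\<epsilon> < 1" "2 \<le> k"
  shows "real (card (even_subsets k)) * (2 ^ d) ^ k * \<epsilon> / 4 \<le>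
         (\<Sum>S\<in>even_subsets k. \<Sum>xs\<in>cube_tuples d k. of_bool (\<not> parity_check f d S xs))"
proof -
  let ?N = "real (card (even_subsets k))"
  have "4 \<le> 2 * ?N"
    using card_even_subsets[of k] assms(4) power_increasing[of 2 k "2::nat"] by simp
  have "{} \<in> even_subsets k"
    by (simp add: even_subsets_def)
  then have "(?N - 1) * ((2 ^ d) ^ k * \<epsilon> / 2) = (\<Sum>S\<in>even_subsets k - {{}}. (2 ^ d) ^ k * \<epsilon> / 2)"
    using \<open>4 \<le> 2 * ?N\<close> by (simp add: of_nat_diff)
  also have "\<dots> \<le> (\<Sum>S\<in>even_subsets k - {{}}. real (card {xs\<in>cube_tuples d k. \<not> parity_check f d S xs}))"
    using assms(1-3) by (intro sum_mono card_parity_check_failures_ge) (auto simp: even_subsets_def)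
  also have "\<dots> \<le> (\<Sum>S\<in>even_subsets k. \<Sum>xs\<in>cube_tuples d k. of_bool (\<not> parity_check f d S xs))"
    by (simp add: Int_def sum_mono2)
  finally have "(?N - 1) * ((2 ^ d) ^ k * \<epsilon> / 2) \<le>
      (\<Sum>S\<in>even_subsets k. \<Sum>xs\<in>cube_tuples d k. of_bool (\<not> parity_check f d S xs))" .
  moreover have "0 \<le> (?N - 2) * ((2 ^ d) ^ k * \<epsilon>)"
    using \<open>4 \<le> 2 * ?N\<close> assms(2) by simp
  ultimately show ?thesis
    by (simp add: algebra_simps)
qed

lemma round_rejections_ge:
  assumes adv: "erasure_adversary d t adv" and far: "eps_far d \<epsilon> f" "0 < \<epsilon>" "\<epsilon> < 1"
    and k: "2 \<le> k" and E: "finite E" "card E + t * Suc k \<le> B"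
  shows "real (card (even_subsets k)) * (2 ^ d) ^ k *
           (\<epsilon> / 4 - real B * (k / 2 ^ d + 1 / card (even_subsets k) + card (even_subsets k) / 2 ^ d))
         \<le> (\<Sum>S\<in>even_subsets k. \<Sum>xs\<in>cube_tuples d k.
              of_bool (\<not> round_accepts S (fresh_answers f adv (round_queries d S xs) (h, E))))"
    (is "_ \<le> (\<Sum>S\<in>even_subsets k. \<Sum>xs\<in>cube_tuples d k. ?rej S xs)")
proof -
  let ?N = "real (card (even_subsets k))"
  define G where "G zs = snd (run_oracle f adv zs (h, E))" for zs
  have G: "finite (G zs) \<and> card (G zs) \<le> B" if "length zs \<le> Suc k" for zs
    using erased_run_oracle_bounded[OF adv E(1), of f zs h] E(2) mult_le_mono2[OF that, of t]
    by (auto simp: G_def)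
  have "(\<Sum>S\<in>even_subsets k. \<Sum>xs\<in>cube_tuples d k. of_bool (\<not> parity_check f d S xs)) \<le>
      (\<Sum>S\<in>even_subsets k. \<Sum>xs\<in>cube_tuples d k.
         ?rej S xs + (\<Sum>j<k. of_bool (xs ! j \<in> G (take j xs))) + of_bool (xor_sum d S xs \<in> G xs))"
    unfolding G_def by (intro sum_mono parity_check_failure_le)
  also have "\<dots> = (\<Sum>S\<in>even_subsets k. \<Sum>xs\<in>cube_tuples d k. ?rej S xs) +
      ?N * (\<Sum>j<k. \<Sum>xs\<in>cube_tuples d k. of_bool (xs ! j \<in> G (take j xs))) +
      (\<Sum>xs\<in>cube_tuples d k. \<Sum>S\<in>even_subsets k. of_bool (xor_sum d S xs \<in> G xs))"
    by (simp only: sum.distrib sum_constant sum.swap[where A="cube_tuples d k" and B="{..<k}"]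
        sum.swap[where A="even_subsets k" and B="cube_tuples d k"])
  finally have split: "(\<Sum>S\<in>even_subsets k. \<Sum>xs\<in>cube_tuples d k. of_bool (\<not> parity_check f d S xs)) \<le> \<dots>" .
  have "(\<Sum>j<k. \<Sum>xs\<in>cube_tuples d k. of_bool (xs ! j \<in> G (take j xs))) \<le>
        (\<Sum>j<k. real B * (2 ^ d) ^ k / 2 ^ d)"
  proof (rule sum_mono)
    fix j assume "j \<in> {..<k}"
    then show "(\<Sum>xs\<in>cube_tuples d k. of_bool (xs ! j \<in> G (take j xs))) \<le> real B * (2 ^ d) ^ k / 2 ^ d"
      using G by (intro sum_erased_prefix_le) auto
  qed
  also have "\<dots> = k * (real B * (2 ^ d) ^ k / 2 ^ d)"
    by simp
  finally have prefix: "?N * (\<Sum>j<k. \<Sum>xs\<in>cube_tuples d k. of_bool (xs ! j \<in> G (take j xs))) \<le>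
        ?N * (k * (real B * (2 ^ d) ^ k / 2 ^ d))"
    by (rule mult_left_mono) simp
  have last: "(\<Sum>xs\<in>cube_tuples d k. \<Sum>S\<in>even_subsets k. of_bool (xor_sum d S xs \<in> G xs))
                 \<le> real B * (2 ^ d) ^ k + real B * ?N ^ 2 * (2 ^ d) ^ k / 2 ^ d"
    using sum_erased_xor_sum_le[of d k G B] G by (simp add: cube_tuples_def Int_def)
  have violations: "?N * (2 ^ d) ^ k * \<epsilon> / 4 \<le>
        (\<Sum>S\<in>even_subsets k. \<Sum>xs\<in>cube_tuples d k. of_bool (\<not> parity_check f d S xs))"
    by (rule sum_parity_check_failures_ge[OF far k])
  have "?N \<noteq> 0"
    using card_even_subsets[of k] k by auto
  then have "?N * X * (\<epsilon> / 4 - b * (k / D + 1 / ?N + ?N / D)) =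
         ?N * X * \<epsilon> / 4 - ?N * (k * (b * X / D)) - (b * X + b * ?N ^ 2 * X / D)" for X D b :: real
    by (simp add: algebra_simps power2_eq_square add_divide_distrib diff_divide_distrib)
  from this[where X="(2 ^ d) ^ k" and D="2 ^ d" and b="real B"]
  have "?N * (2 ^ d) ^ k * (\<epsilon> / 4 - real B * (k / 2 ^ d + 1 / ?N + ?N / 2 ^ d)) =
        ?N * (2 ^ d) ^ k * \<epsilon> / 4 - ?N * (k * (real B * (2 ^ d) ^ k / 2 ^ d)) -
        (real B * (2 ^ d) ^ k + real B * ?N ^ 2 * (2 ^ d) ^ k / 2 ^ d)" .
  also have "\<dots> \<le>
        (\<Sum>S\<in>even_subsets k. \<Sum>xs\<in>cube_tuples d k. of_bool (\<not> parity_check f d S xs)) -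
        ?N * (\<Sum>j<k. \<Sum>xs\<in>cube_tuples d k. of_bool (xs ! j \<in> G (take j xs))) -
        (\<Sum>xs\<in>cube_tuples d k. \<Sum>S\<in>even_subsets k. of_bool (xor_sum d S xs \<in> G xs))"
    using violations prefix last by (intro diff_mono)
  also have "\<dots> \<le> (\<Sum>S\<in>even_subsets k. \<Sum>xs\<in>cube_tuples d k. ?rej S xs)"
    using split by linarith
  finally show ?thesis .
qed

section \<open>The tester\<close>

definition round_sample :: "nat \<Rightarrow> nat \<Rightarrow> (nat set \<times> bool list list) pmf" where
  "round_sample d k = pmf_of_set (even_subsets k \<times> cube_tuples d k)"

fun linearity_tester :: "nat \<Rightarrow> nat \<Rightarrow> nat \<Rightarrow> nonadaptive_tester" where
  "linearity_tester d k 0 = return_pmf ([], \<lambda>_. True)"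
| "linearity_tester d k (Suc n) =
     bind_pmf (round_sample d k) (\<lambda>(S, xs). map_pmf (\<lambda>(qs, dec).
       (round_queries d S xs @ qs, \<lambda>ans. round_accepts S (take (Suc k) ans) \<and> dec (drop (Suc k) ans)))
       (linearity_tester d k n))"

definition accept_prob_from :: "nat \<Rightarrow> nat \<Rightarrow> (bool list \<Rightarrow> bool) \<Rightarrow> (history \<Rightarrow> bool list set)
                                 \<Rightarrow> nat \<Rightarrow> history \<times> bool list set \<Rightarrow> real" where
  "accept_prob_from d k f adv n st =
     measure_pmf.prob (linearity_tester d k n) {(qs, dec). dec (fresh_answers f adv qs st)}"

lemma measure_bind_pmf:
  "measure_pmf.prob (bind_pmf p g) A = (\<integral>x. measure_pmf.prob (g x) A \<partial>p)"
  unfolding measure_pmf_bind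
  by (rule measure_pmf.measure_bind[where N="count_space UNIV"])
     (auto simp: measurable_def measure_pmf_in_subprob_algebra)

lemma round_space_nonempty: "even_subsets k \<times> cube_tuples d k \<noteq> {}"
proof -
  have "{} \<in> even_subsets k" "replicate k (replicate d False) \<in> cube_tuples d k"
    by (auto simp: even_subsets_def cube_tuples_def cube_def)
  then show ?thesis
    by blast
qed

lemma set_round_sample: "set_pmf (round_sample d k) = even_subsets k \<times> cube_tuples d k"
  unfolding round_sample_def using round_space_nonempty by (simp add: set_pmf_of_set)

lemma length_round_queries: "xs \<in> cube_tuples d k \<Longrightarrow> length (round_queries d S xs) = Suc k"
  by (simp add: round_queries_def cube_tuples_def)

lemma set_linearity_tester:
  "(qs, dec) \<in> set_pmf (linearity_tester d k n) \<Longrightarrow> length qs = n * Suc k \<and> set qs \<subseteq> cube d"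
proof (induction n arbitrary: qs dec)
  case (Suc n)
  then obtain S xs qs' dec' where "xs \<in> cube_tuples d k" "(qs', dec') \<in> set_pmf (linearity_tester d k n)"
    "qs = round_queries d S xs @ qs'"
    by (auto simp: set_round_sample)
  with Suc.IH show ?case
    by (auto simp: round_queries_def cube_tuples_def)
qed simp

lemma linearity_tester_accepts_linear:
  assumes "linear_fn d f" "(qs, dec) \<in> set_pmf (linearity_tester d k n)"
  shows "dec (fresh_answers f adv qs st)"
  using assms(2)
proof (induction n arbitrary: qs dec st)
  case (Suc n)
  then obtain S xs qs' dec' where Sxs: "S \<in> even_subsets k" "xs \<in> cube_tuples d k"
    and rest: "(qs', dec') \<in> set_pmf (linearity_tester d k n)" "qs = round_queries d S xs @ qs'"
      "dec = (\<lambda>ans. round_accepts S (take (Suc k) ans) \<and> dec' (drop (Suc k) ans))"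
    by (auto simp: set_round_sample)
  have "length (fresh_answers f adv (round_queries d S xs) st) = Suc k"
    using Sxs(2) by (simp add: length_round_queries)
  moreover have "round_accepts S (fresh_answers f adv (round_queries d S xs) st)"
    using round_accepts_if_linear[OF assms(1) Sxs] .
  moreover have "dec' (fresh_answers f adv qs' (run_oracle f adv (round_queries d S xs) st))"
    using Suc.IH[OF rest(1)] .
  ultimately show ?case
    using rest(2,3) by (simp add: fresh_answers_append)
qed simp

lemma accept_prob_from_Suc:
  "accept_prob_from d k f adv (Suc n) st =
     (\<Sum>(S, xs)\<in>even_subsets k \<times> cube_tuples d k.
        of_bool (round_accepts S (fresh_answers f adv (round_queries d S xs) st)) *
        accept_prob_from d k f adv n (run_oracle f adv (round_queries d S xs) st))
     / card (even_subsets k \<times> cube_tuples d k)"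
proof -
  have "measure_pmf.prob (map_pmf (\<lambda>(qs, dec).
      (round_queries d S xs @ qs, \<lambda>ans. round_accepts S (take (Suc k) ans) \<and> dec (drop (Suc k) ans)))
      (linearity_tester d k n)) {(qs, dec). dec (fresh_answers f adv qs st)} =
    of_bool (round_accepts S (fresh_answers f adv (round_queries d S xs) st)) *
    accept_prob_from d k f adv n (run_oracle f adv (round_queries d S xs) st)"
    if "(S, xs) \<in> even_subsets k \<times> cube_tuples d k" for S xs
  proof -
    have "(\<lambda>(qs, dec). (round_queries d S xs @ qs,
             \<lambda>ans. round_accepts S (take (Suc k) ans) \<and> dec (drop (Suc k) ans))) -`
          {(qs, dec). dec (fresh_answers f adv qs st)} =
          (if round_accepts S (fresh_answers f adv (round_queries d S xs) st)
           then {(qs, dec). dec (fresh_answers f adv qs (run_oracle f adv (round_queries d S xs) st))}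
           else {})"
      using that by (auto simp: fresh_answers_append length_round_queries)
    then show ?thesis
      by (simp add: accept_prob_from_def)
  qed
  then have "accept_prob_from d k f adv (Suc n) st =
    (\<integral>(S, xs). of_bool (round_accepts S (fresh_answers f adv (round_queries d S xs) st)) *
        accept_prob_from d k f adv n (run_oracle f adv (round_queries d S xs) st) \<partial>round_sample d k)"
    unfolding accept_prob_from_def[of d k f adv "Suc n"] linearity_tester.simps measure_bind_pmf
    by (intro integral_cong_AE)
       (auto simp del: measure_map_pmf simp: AE_measure_pmf_iff set_round_sample split: prod.splits)
  also have "\<dots> = (\<Sum>(S, xs)\<in>even_subsets k \<times> cube_tuples d k.
        of_bool (round_accepts S (fresh_answers f adv (round_queries d S xs) st)) *
        accept_prob_from d k f adv n (run_oracle f adv (round_queries d S xs) st))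
     / card (even_subsets k \<times> cube_tuples d k)"
    unfolding round_sample_def
    by (rule integral_pmf_of_set[OF round_space_nonempty]) simp
  finally show ?thesis .
qed

(* Each round adds at most t (k+1) erased points, so the per-round bound holds in every state
   reachable within the erasure budget B, whatever the earlier answers were. *)
lemma accept_prob_from_le:
  assumes adv: "erasure_adversary d t adv" and far: "eps_far d \<epsilon> f" "0 < \<epsilon>" "\<epsilon> < 1"
    and k: "2 \<le> k" and \<gamma>: "0 \<le> \<gamma>"
      "\<gamma> \<le> \<epsilon> / 4 - real B * (k / 2 ^ d + 1 / card (even_subsets k) + card (even_subsets k) / 2 ^ d)"
  shows "finite E \<Longrightarrow> card E + t * Suc k * n \<le> B \<Longrightarrow> accept_prob_from d k f adv n (h, E) \<le> (1 - \<gamma>) ^ n"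
proof (induction n arbitrary: h E)
  case 0
  then show ?case
    by (simp add: accept_prob_from_def)
next
  case (Suc n)
  let ?\<Omega> = "even_subsets k \<times> cube_tuples d k"
  let ?M = "real (card ?\<Omega>)"
  let ?acc = "\<lambda>S xs. round_accepts S (fresh_answers f adv (round_queries d S xs) (h, E))"
  have M: "0 < ?M" "?M = real (card (even_subsets k)) * (2 ^ d) ^ k"
    using round_space_nonempty[of k d] by (simp_all add: card_gt_0_iff card_cartesian_product card_cube_tuples)
  have "0 \<le> real B * (k / 2 ^ d + 1 / card (even_subsets k) + card (even_subsets k) / 2 ^ d)"
    by simp
  then have "\<gamma> \<le> 1"
    using \<gamma>(2) far(3) by linarith
  have step: "accept_prob_from d k f adv n (run_oracle f adv (round_queries d S xs) (h, E)) \<le> (1 - \<gamma>) ^ n"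
    if "(S, xs) \<in> ?\<Omega>" for S xs
  proof -
    obtain h' E' where run: "run_oracle f adv (round_queries d S xs) (h, E) = (h', E')"
      by fastforce
    have "finite E'" "card E' \<le> card E + t * Suc k"
      using erased_run_oracle_bounded[OF adv Suc.prems(1), of f "round_queries d S xs" h] that run
      by (auto simp: length_round_queries)
    then have "accept_prob_from d k f adv n (h', E') \<le> (1 - \<gamma>) ^ n"
      using Suc.prems(2) by (intro Suc.IH) (auto simp: algebra_simps)
    then show ?thesis
      by (simp add: run)
  qed
  have "card E + t * Suc k \<le> B"
    using Suc.prems(2) by (auto intro: le_trans[OF _ Suc.prems(2)])
  then have "?M * (\<epsilon> / 4 - real B * (k / 2 ^ d + 1 / card (even_subsets k) + card (even_subsets k) / 2 ^ d))
             \<le> (\<Sum>S\<in>even_subsets k. \<Sum>xs\<in>cube_tuples d k. of_bool (\<not> ?acc S xs))"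
    unfolding M(2) by (rule round_rejections_ge[OF adv far k Suc.prems(1)])
  moreover have "?M * \<gamma> \<le> ?M * (\<epsilon> / 4 - real B *
                   (k / 2 ^ d + 1 / card (even_subsets k) + card (even_subsets k) / 2 ^ d))"
    using \<gamma>(2) by (rule mult_left_mono) simp
  ultimately have "?M * \<gamma> \<le> (\<Sum>S\<in>even_subsets k. \<Sum>xs\<in>cube_tuples d k. of_bool (\<not> ?acc S xs))"
    by linarith
  then have acc: "(\<Sum>(S, xs)\<in>?\<Omega>. of_bool (?acc S xs)) \<le> ?M * (1 - \<gamma>)"
    by (simp add: sum.cartesian_product[symmetric] of_bool_not_iff sum_subtractf card_cube_tuples
        M(2) algebra_simps)
  have "accept_prob_from d k f adv (Suc n) (h, E) \<le>
        (\<Sum>(S, xs)\<in>?\<Omega>. of_bool (?acc S xs)) * (1 - \<gamma>) ^ n / ?M"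
    unfolding accept_prob_from_Suc sum_distrib_right case_prod_unfold using step
    by (intro divide_right_mono sum_mono mult_left_mono) auto
  also have "\<dots> \<le> ?M * (1 - \<gamma>) * (1 - \<gamma>) ^ n / ?M"
    using acc \<open>\<gamma> \<le> 1\<close> by (intro divide_right_mono mult_right_mono) auto
  also have "\<dots> = (1 - \<gamma>) ^ Suc n"
    using M(1) by (simp only: mult.assoc nonzero_mult_div_cancel_left[OF less_imp_neq[OF M(1), symmetric]]
        power_Suc)
  finally show ?case .
qed

section \<open>Choice of parameters\<close>

definition num_rounds :: "real \<Rightarrow> nat" where
  "num_rounds \<epsilon> = nat \<lceil>16 / \<epsilon>\<rceil>"

(* Bounding all erasures of the run by eps 2^k / 48 makes the loss from erased sums x_S with
   unique S at most eps/24 per round. *)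
definition tuple_size :: "nat \<Rightarrow> real \<Rightarrow> nat" where
  "tuple_size t \<epsilon> = (LEAST k. 2 \<le> k \<and> 48 * real (t * Suc k * num_rounds \<epsilon>) \<le> \<epsilon> * 2 ^ k)"

lemma num_rounds_bounds:
  assumes "0 < \<epsilon>" "\<epsilon> < 1"
  shows "16 / \<epsilon> \<le> num_rounds \<epsilon>" "num_rounds \<epsilon> \<le> 17 / \<epsilon>"
proof -
  show "16 / \<epsilon> \<le> num_rounds \<epsilon>"
    unfolding num_rounds_def by (rule real_nat_ceiling_ge)
  have "real (num_rounds \<epsilon>) \<le> 16 / \<epsilon> + 1"
    using less_imp_le[OF assms(1)] of_int_ceiling_le_add_one[of "16 / \<epsilon>"] by (simp add: num_rounds_def)
  also have "\<dots> \<le> 17 / \<epsilon>"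
    using assms by (simp add: field_simps)
  finally show "num_rounds \<epsilon> \<le> 17 / \<epsilon>" .
qed

lemma tuple_size_0: "0 \<le> \<epsilon> \<Longrightarrow> tuple_size 0 \<epsilon> = 2"
  unfolding tuple_size_def by (rule Least_equality) auto

lemma ln_2_ge_half: "1 / 2 \<le> ln (2 :: real)"
  using ln_one_minus_pos_upper_bound[of "1 / 2"] by (simp add: ln_div)

lemma Suc_double_le_two_power: "3 \<le> m \<Longrightarrow> 2 * m + 1 \<le> (2 :: nat) ^ m"
  by (induction m rule: dec_induct) simp_all

lemma tuple_size_condition_at_double:
  assumes "0 < \<epsilon>" "\<epsilon> < 1" "1 \<le> t" "10 + 2 * log 2 (real t / \<epsilon>) \<le> real m"
  shows "2 \<le> 2 * m \<and> 48 * real (t * Suc (2 * m) * num_rounds \<epsilon>) \<le> \<epsilon> * 2 ^ (2 * m)"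
proof -
  let ?x = "real t / \<epsilon>" and ?R = "real (num_rounds \<epsilon>)"
  have x: "1 < ?x"
    using assms(1-3) by (simp add: field_simps)
  then have "0 < log 2 ?x"
    by simp
  then have "(3::real) \<le> real m"
    using assms(4) by linarith
  then have "3 \<le> m"
    by simp
  then have "2 * m + 1 \<le> (2::nat) ^ m"
    by (rule Suc_double_le_two_power)
  have "48 * real t * ?R / \<epsilon> \<le> 48 * (real t * real t) * 17 / (\<epsilon> * \<epsilon>)"
    using num_rounds_bounds[OF assms(1,2)] assms(1,3) by (simp add: field_simps mult_mono)
  also have "\<dots> \<le> 1024 * ?x ^ 2"
    using assms(1) by (simp add: power2_eq_square field_simps)
  also have "\<dots> = 2 powr 10 * (2 powr (log 2 ?x)) powr 2"
    using x by simp
  also have "\<dots> = 2 powr (10 + 2 * log 2 ?x)"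
    by (simp add: powr_add powr_powr mult.commute)
  also have "\<dots> \<le> 2 ^ m"
    using assms(4) by (simp add: powr_realpow[symmetric] del: powr_realpow)
  finally have "48 * real t * ?R \<le> \<epsilon> * 2 ^ m"
    using assms(1) by (simp add: field_simps)
  moreover have "real (2 * m + 1) \<le> 2 ^ m"
    using \<open>2 * m + 1 \<le> 2 ^ m\<close> of_nat_mono by fastforce
  ultimately have "48 * real t * ?R * real (2 * m + 1) \<le> \<epsilon> * 2 ^ m * 2 ^ m"
    by (rule mult_mono) (use assms(1) in auto)
  moreover have "real (t * Suc (2 * m) * num_rounds \<epsilon>) = real t * ?R * real (2 * m + 1)"
    by (simp add: algebra_simps)
  moreover have "(2::real) ^ (2 * m) = 2 ^ m * 2 ^ m"
    by (simp add: mult_2 power_add)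
  ultimately show ?thesis
    using \<open>3 \<le> m\<close> by (simp only: mult.assoc) simp
qed

lemma tuple_size_props:
  assumes "0 < \<epsilon>" "\<epsilon> < 1" "1 \<le> t"
  defines "k \<equiv> tuple_size t \<epsilon>" and "R \<equiv> real (num_rounds \<epsilon>)"
  shows "2 \<le> k" "48 * (real t * (k + 1) * R) \<le> \<epsilon> * 2 ^ k" "\<epsilon> * 2 ^ k \<le> 96 * (real t * k * R)"
    and "real k + 1 \<le> 8 * ln (real t / \<epsilon>) + 23"
proof -
  let ?x = "real t / \<epsilon>"
  let ?P = "\<lambda>k. 2 \<le> k \<and> 48 * real (t * Suc k * num_rounds \<epsilon>) \<le> \<epsilon> * 2 ^ k"
  define m where "m = nat \<lceil>2 * log 2 ?x\<rceil> + 10"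
  have "1 < ?x"
    using assms(1-3) by (simp add: field_simps)
  then have "0 < log 2 ?x"
    by simp
  then have "0 \<le> \<lceil>2 * log 2 ?x\<rceil>"
    by simp
  then have "real m = \<lceil>2 * log 2 ?x\<rceil> + 10"
    by (simp add: m_def)
  then have m: "10 + 2 * log 2 ?x \<le> m" "m \<le> 2 * log 2 ?x + 11"
    using le_of_int_ceiling[of "2 * log 2 ?x"] of_int_ceiling_le_add_one[of "2 * log 2 ?x"]
    by linarith+
  have Pk: "?P k" and k_le: "k \<le> 2 * m"
    using tuple_size_condition_at_double[OF assms(1-3) m(1)]
    unfolding k_def tuple_size_def by (rule LeastI, rule Least_le)
  then show "2 \<le> k" "48 * (real t * (k + 1) * R) \<le> \<epsilon> * 2 ^ k"
    by (simp_all add: R_def algebra_simps)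
  show "\<epsilon> * 2 ^ k \<le> 96 * (real t * k * R)"
  proof (cases "k = 2")
    case True
    have "16 \<le> 16 / \<epsilon>"
      using assms(1,2) by (simp add: field_simps)
    then have "1 \<le> R"
      using num_rounds_bounds(1)[OF assms(1,2)] by (simp add: R_def)
    then have "1 \<le> real t * R"
      using assms(3) mult_mono[of 1 "real t" 1 R] by simp
    then show ?thesis
      using True assms(2) by (simp add: mult_ac)
  next
    case False
    then have k1: "2 \<le> k - 1" "Suc (k - 1) = k"
      using Pk by auto
    have "\<not> ?P (k - 1)"
      using Pk False unfolding k_def tuple_size_def by (intro not_less_Least) auto
    then have "\<epsilon> * 2 ^ (k - 1) < 48 * (real t * k * R)"
      using k1 by (simp add: R_def mult_ac)
    moreover have "(2::real) ^ k = 2 * 2 ^ (k - 1)"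
      using k1(2) by (metis power_Suc)
    ultimately show ?thesis
      by (simp add: mult_ac)
  qed
  have "log 2 ?x \<le> 2 * ln ?x"
    using ln_2_ge_half \<open>1 < ?x\<close> by (simp add: log_def field_simps)
  then show "real k + 1 \<le> 8 * ln ?x + 23"
    using k_le m(2) by linarith
qed

lemma ln_inverse_sq_mult_le: "0 < e \<Longrightarrow> e \<le> 1 \<Longrightarrow> ln (1 / e) ^ 2 * e \<le> (4 :: real)"
proof -
  assume e: "0 < e" "e \<le> 1"
  have "ln (1 / e) = 2 * ln (sqrt (1 / e))"
    using e by (simp add: ln_sqrt)
  also have "\<dots> \<le> 2 * sqrt (1 / e)"
    using ln_le_minus_one[of "sqrt (1 / e)"] e by simp
  finally have "ln (1 / e) ^ 2 \<le> (2 * sqrt (1 / e)) ^ 2"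
    using e by (intro power_mono) auto
  also have "\<dots> = 4 / e"
    using e by (simp add: power_mult_distrib)
  finally show ?thesis
    using e by (simp add: field_simps)
qed

lemma square_le_of_le_log_bound:
  assumes "0 < \<epsilon>" "\<epsilon> < 1" "1 \<le> t" "0 \<le> y" "y \<le> 8 * ln (real t / \<epsilon>) + 23"
  shows "y ^ 2 * \<epsilon> \<le> 2547 * real t ^ 2"
proof -
  let ?a = "ln (real t)" and ?b = "ln (1 / \<epsilon>)"
  have ab: "0 \<le> ?a" "?a \<le> real t" "0 \<le> ?b" "?b ^ 2 * \<epsilon> \<le> 4"
    using assms ln_le_minus_one[of "real t"] ln_inverse_sq_mult_le[of \<epsilon>] by auto
  have "?a ^ 2 \<le> real t ^ 2"
    using ab by (intro power_mono) auto
  moreover have "?a ^ 2 * \<epsilon> \<le> ?a ^ 2"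
    using assms(2) by (simp add: mult_left_le)
  ultimately have a: "?a ^ 2 * \<epsilon> \<le> real t ^ 2"
    by linarith
  have "y ^ 2 \<le> (8 * ?a + 8 * ?b + 23) ^ 2"
    using assms ab by (intro power_mono) (simp_all add: ln_div)
  also have "\<dots> \<le> 3 * ((8 * ?a) ^ 2 + (8 * ?b) ^ 2 + 23 ^ 2)"
    using sum_squares_ge_zero[of "8 * ?a - 8 * ?b" "8 * ?b - 23"]
      zero_le_power2[of "8 * ?a - 23"] by (simp add: power2_eq_square algebra_simps)
  finally have "y ^ 2 * \<epsilon> \<le> 3 * ((8 * ?a) ^ 2 + (8 * ?b) ^ 2 + 23 ^ 2) * \<epsilon>"
    using assms(1) by (simp add: mult_right_mono)
  also have "\<dots> = 192 * (?a ^ 2 * \<epsilon>) + 192 * (?b ^ 2 * \<epsilon>) + 1587 * \<epsilon>"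
    by (simp add: power_mult_distrib algebra_simps)
  finally show ?thesis
    using ab a assms(2,3) one_le_power[of "real t" 2] by linarith
qed

lemma fourth_power_le_if_le_powr:
  assumes "0 < \<epsilon>" "0 \<le> x" "x \<le> c * \<epsilon> powr (5 / 4) * 2 powr (real d / 4)"
  shows "x ^ 4 \<le> c ^ 4 * \<epsilon> ^ 5 * 2 ^ d"
proof -
  have e: "(\<epsilon> powr (5 / 4)) ^ 4 = \<epsilon> ^ 5" "(2 powr (real d / 4)) ^ 4 = (2::real) ^ d"
    using assms(1) by (simp_all add: powr_power powr_realpow)
  have "x ^ 4 \<le> (c * \<epsilon> powr (5 / 4) * 2 powr (real d / 4)) ^ 4"
    using assms(3,2) by (rule power_mono)
  also have "\<dots> = c ^ 4 * \<epsilon> ^ 5 * 2 ^ d"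
    by (simp only: power_mult_distrib e)
  finally show ?thesis .
qed

lemma erasures_mult_two_pow_le:
  assumes "0 < \<epsilon>" "\<epsilon> < 1" "1 \<le> t" "real t \<le> 1 / 300 * \<epsilon> powr (5 / 4) * 2 powr (real d / 4)"
  defines "k \<equiv> tuple_size t \<epsilon>" and "R \<equiv> real (num_rounds \<epsilon>)"
  shows "real t * (k + 1) * R * 2 ^ k \<le> \<epsilon> * 2 ^ d / 48"
proof -
  note k = tuple_size_props[OF assms(1-3), folded k_def R_def]
  have R: "0 \<le> R" "R \<le> 17 / \<epsilon>"
    using num_rounds_bounds[OF assms(1,2)] by (simp_all add: R_def)
  have "real t * (k + 1) * R * 2 ^ k \<le> real t * (k + 1) * R * (96 * (real t * k * R) / \<epsilon>)"
    using k(3) assms(1) R(1) by (intro mult_left_mono) (simp_all add: field_simps)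
  also have "\<dots> \<le> 96 * real t ^ 2 * (k + 1) ^ 2 * R ^ 2 / \<epsilon>"
    using assms(1) R(1) by (simp add: power2_eq_square field_simps mult_left_mono)
  also have "\<dots> \<le> 96 * real t ^ 2 * (k + 1) ^ 2 * (17 / \<epsilon>) ^ 2 / \<epsilon>"
    using assms(1) R by (intro divide_right_mono mult_left_mono power_mono) auto
  also have "\<dots> = 96 * 289 * real t ^ 2 * ((real k + 1) ^ 2 * \<epsilon>) / \<epsilon> ^ 4"
    using assms(1) by (simp add: power2_eq_square power4_eq_xxxx field_simps)
  also have "\<dots> \<le> 96 * 289 * real t ^ 2 * (2547 * real t ^ 2) / \<epsilon> ^ 4"
    using square_le_of_le_log_bound[OF assms(1-3) _ k(4)] assms(1)
    by (intro divide_right_mono mult_left_mono) auto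
  also have "\<dots> = 70663968 * real t ^ 4 / \<epsilon> ^ 4"
    by (simp add: power2_eq_square power4_eq_xxxx)
  also have "\<dots> \<le> 70663968 * ((1 / 300) ^ 4 * \<epsilon> ^ 5 * 2 ^ d) / \<epsilon> ^ 4"
    using fourth_power_le_if_le_powr[OF assms(1) _ assms(4)] assms(1)
    by (intro divide_right_mono mult_left_mono) auto
  also have "\<dots> \<le> \<epsilon> * 2 ^ d / 48"
    using assms(1) by (simp add: field_simps numeral_eq_Suc)
  finally show ?thesis .
qed

lemma erasure_loss_le:
  assumes "0 < \<epsilon>" "\<epsilon> < 1" "real t \<le> 1 / 300 * \<epsilon> powr (5 / 4) * 2 powr (real d / 4)"
  defines "k \<equiv> tuple_size t \<epsilon>"
  shows "real (t * Suc k * num_rounds \<epsilon>) *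
           (k / 2 ^ d + 1 / card (even_subsets k) + card (even_subsets k) / 2 ^ d) \<le> \<epsilon> / 8"
proof (cases "t = 0")
  case False
  then have t: "1 \<le> t"
    by simp
  define B where "B = real (t * Suc k * num_rounds \<epsilon>)"
  define N where "N = real (card (even_subsets k))"
  note k = tuple_size_props[OF assms(1,2) t, folded k_def]
  have B: "B = real t * (k + 1) * real (num_rounds \<epsilon>)" "0 \<le> B"
    by (simp_all add: B_def algebra_simps)
  have N: "2 * N = 2 ^ k"
    using card_even_subsets[of k] k(1) unfolding N_def by (metis not_numeral_le_zero of_nat_mult
        of_nat_numeral of_nat_power)
  have two_pow: "B * 2 ^ k \<le> \<epsilon> * 2 ^ d / 48"
    using erasures_mult_two_pow_le[OF assms(1,2) t assms(3), folded k_def] B(1) by simp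
  have "B / N = 2 * B / 2 ^ k"
    by (simp add: N[symmetric])
  also have "\<dots> \<le> \<epsilon> / 24"
    using k(2) B(1) by (simp add: field_simps)
  finally have "B / N \<le> \<epsilon> / 24" .
  moreover have "B * (k / 2 ^ d) \<le> \<epsilon> / 48"
  proof -
    have "B * k \<le> B * 2 ^ k"
      using B(2) of_nat_less_two_power[of k] by (intro mult_left_mono) auto
    then show ?thesis
      using two_pow by (simp add: field_simps)
  qed
  moreover have "B * (N / 2 ^ d) \<le> \<epsilon> / 48"
  proof -
    have "0 \<le> N"
      by (simp add: N_def)
    then have "N \<le> 2 ^ k"
      using N by linarith
    then have "B * N \<le> B * 2 ^ k"
      using B(2) by (rule mult_left_mono)
    then show ?thesis
      using two_pow by (simp add: field_simps)
  qed
  moreover have "B * (k / 2 ^ d + 1 / N + N / 2 ^ d) = B * (k / 2 ^ d) + B / N + B * (N / 2 ^ d)"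
    by (simp add: algebra_simps)
  ultimately show ?thesis
    using assms(1) unfolding B_def[symmetric] N_def[symmetric] by linarith
qed (use assms(1) in simp)

lemma power_one_minus_le_one_third:
  assumes "0 \<le> x" "x \<le> 1" "2 \<le> real n * x"
  shows "(1 - x) ^ n \<le> (1 / 3 :: real)"
proof -
  have "(1 - x) ^ n \<le> exp (- x) ^ n"
    using assms(2) exp_ge_add_one_self[of "- x"] by (intro power_mono) auto
  also have "\<dots> = exp (- (real n * x))"
    by (simp add: exp_of_nat_mult[symmetric])
  also have "\<dots> \<le> exp (- 2)"
    using assms(3) by simp
  also have "\<dots> \<le> 1 / 3"
    using exp_ge_add_one_self[of 2] by (simp add: exp_minus field_simps)
  finally show ?thesis .
qed

lemma tuple_size_ge_2: "0 < \<epsilon> \<Longrightarrow> \<epsilon> < 1 \<Longrightarrow> 2 \<le> tuple_size t \<epsilon>"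
  using tuple_size_0[of \<epsilon>] tuple_size_props(1)[of \<epsilon> t] by (cases "t = 0") auto

lemma linearity_tester_is_tester:
  assumes "0 < \<epsilon>" "\<epsilon> < 1" "real t \<le> 1 / 300 * \<epsilon> powr (5 / 4) * 2 powr (real d / 4)"
  shows "one_sided_oer_linearity_tester d t \<epsilon> (linearity_tester d (tuple_size t \<epsilon>) (num_rounds \<epsilon>))"
proof -
  define k where "k = tuple_size t \<epsilon>"
  define R where "R = num_rounds \<epsilon>"
  have far: "accept_prob (linearity_tester d k R) f adv \<le> 1 / 3"
    if "erasure_adversary d t adv" "eps_far d \<epsilon> f" for f adv
  proof -
    have "accept_prob (linearity_tester d k R) f adv = accept_prob_from d k f adv R ([], {})"
      by (simp add: accept_prob_def accept_prob_from_def answers_eq_fresh_answers)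
    also have "\<dots> \<le> (1 - \<epsilon> / 8) ^ R"
      using erasure_loss_le[OF assms] assms(1) tuple_size_ge_2[OF assms(1,2)]
      by (intro accept_prob_from_le[OF that assms(1,2), where B="t * Suc k * R"])
         (simp_all add: k_def R_def)
    also have "\<dots> \<le> 1 / 3"
      using num_rounds_bounds(1)[OF assms(1,2)] assms(1,2)
      by (intro power_one_minus_le_one_third) (simp_all add: R_def field_simps)
    finally show ?thesis .
  qed
  have "accept_prob (linearity_tester d k R) f adv = 1" if "linear_fn d f" for f adv
    unfolding accept_prob_def answers_eq_fresh_answers using linearity_tester_accepts_linear[OF that]
    by (subst measure_pmf.prob_eq_1) (auto simp: AE_measure_pmf_iff)
  then show ?thesis
    using far set_linearity_tester unfolding one_sided_oer_linearity_tester_def k_def R_def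
    by fastforce
qed

lemma linearity_tester_length_le:
  assumes "0 < \<epsilon>" "\<epsilon> < 1" "qd \<in> set_pmf (linearity_tester d (tuple_size t \<epsilon>) (num_rounds \<epsilon>))"
  shows "real (length (fst qd)) \<le> 600 / \<epsilon> * max 1 (ln (real t / \<epsilon>))"
proof -
  define k where "k = tuple_size t \<epsilon>"
  have "real k + 1 \<le> 31 * max 1 (ln (real t / \<epsilon>))"
  proof (cases "t = 0")
    case False
    then have "real k + 1 \<le> 8 * ln (real t / \<epsilon>) + 23"
      using tuple_size_props(4)[OF assms(1,2)] by (simp add: k_def)
    moreover have "8 * ln (real t / \<epsilon>) + 23 \<le> 31 * max 1 (ln (real t / \<epsilon>))"
      by (simp add: max_def)
    ultimately show ?thesis
      by linarith
  qed (use assms(1) tuple_size_0 k_def in simp)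
  then have "real (num_rounds \<epsilon>) * (real k + 1) \<le> 17 / \<epsilon> * (31 * max 1 (ln (real t / \<epsilon>)))"
    using num_rounds_bounds(2)[OF assms(1,2)] assms(1) by (intro mult_mono) auto
  moreover have "real (length (fst qd)) = real (num_rounds \<epsilon>) * (real k + 1)"
    using set_linearity_tester[of "fst qd" "snd qd"] assms(3) by (simp add: k_def algebra_simps)
  ultimately have "real (length (fst qd)) \<le> 17 / \<epsilon> * (31 * max 1 (ln (real t / \<epsilon>)))"
    by simp
  also have "\<dots> \<le> 600 / \<epsilon> * max 1 (ln (real t / \<epsilon>))"
    using assms(1) by (simp add: field_simps)
  finally show ?thesis .
qed

theorem theorem2p1:
  shows "\<exists>c0::real. 0 < c0 \<and> c0 < 1 \<and>
    (\<exists>C::real. \<exists>T :: nat \<Rightarrow> nat \<Rightarrow> real \<Rightarrow> nonadaptive_tester.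
       \<forall>d t \<epsilon>. 0 < \<epsilon> \<longrightarrow> \<epsilon> < 1 \<longrightarrow>
          real t \<le> c0 * \<epsilon> powr (5/4) * 2 powr (real d / 4) \<longrightarrow>
            one_sided_oer_linearity_tester d t \<epsilon> (T d t \<epsilon>) \<and>
            (\<forall>qd\<in>set_pmf (T d t \<epsilon>).
               real (length (fst qd)) \<le> C / \<epsilon> * max 1 (ln (real t / \<epsilon>))))"
  using linearity_tester_is_tester linearity_tester_length_le
  by (intro exI[of _ "1 / 300"] conjI exI[of _ 600]
      exI[of _ "\<lambda>d t \<epsilon>. linearity_tester d (tuple_size t \<epsilon>) (num_rounds \<epsilon>)"] allI impI ballI) auto

end
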